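(* Let $k\ge d$, let $\mathbf{W}^*\in\mathbb{R}^{k\times d}$ with $\sigma_{\min}(\mathbf{W}^* )>0$, and let $\mathbf{v}^*\in\mathbb{R}^k$ have all its nonzero entries of the same sign. Let labels be generated as $y_i=\langle \mathbf{v}^*,\phi(\mathbf{W}^*\mathbf{x}_i)\rangle$ with $\phi(z)=z^2$ applied entrywise. Fix $\mathbf{v}\in\mathbb{R}^k$ whose nonzero entries all have that same sign and which has at least $d$ nonzero entries. Consider $$\mathcal{L}(\mathbf{W})=\frac{1}{2n}\sum_{i=1}^n\big(y_i-\mathbf{v}^T\phi(\mathbf{W}\mathbf{x}_i)\big)^2,\qquad \mathbf{W}\in\mathbb{R}^{k\times d}.$$ There is a numerical constant $c>0$ such that if $d\le n\le c d^2$, then for Lebesgue-almost every choice of inputs $(\mathbf{x}_1,\dots,\mathbf{x}_n)\in(\mathbb{R}^d)^n$: (i) all local minima of $\mathcal{L}$ are global minima; (ii) at every saddle point $\mathbf{W}_s$ there is $\mathbf{U}\in\mathbb{R}^{k\times d}$ with $\mathrm{vect}(\mathbf{U})^T\nabla^2\mathcal{L}(\mathbf{W}_s)\mathrm{vect}(\mathbf{U})<0$; (iii) the global minimum value of $\mathcal{L}$ is $0$.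
   Context: $\mathrm{vect}(\mathbf{U})$ denotes the vectorization of $\mathbf{U}$ and $\nabla^2\mathcal{L}$ the Hessian with respect to $\mathrm{vect}(\mathbf{W})$. $\sigma_{\min}$ denotes the smallest singular value. *)

theory Defs
  imports "HOL-Analysis.Analysis"
begin

text \<open>Matrices in R^(k x d) are represented as functions nat => nat => real,
  with entries (r,j) for r < k, j < d, and zero outside that index range.\<close>

definition matr :: "nat \<Rightarrow> nat \<Rightarrow> (nat \<Rightarrow> nat \<Rightarrow> real) set" where
  "matr k d = {W. \<forall>r j. (k \<le> r \<or> d \<le> j) \<longrightarrow> W r j = 0}"

definition frob2 :: "nat \<Rightarrow> nat \<Rightarrow> (nat \<Rightarrow> nat \<Rightarrow> real) \<Rightarrow> real" where
  "frob2 k d W = (\<Sum>r<k. \<Sum>j<d. (W r j)^2)"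

definition sigma_min :: "nat \<Rightarrow> nat \<Rightarrow> (nat \<Rightarrow> nat \<Rightarrow> real) \<Rightarrow> real" where
  "sigma_min k d W = Inf {sqrt (\<Sum>r<k. (\<Sum>j<d. W r j * x j)^2) | x.
       (\<Sum>j<d. (x j)^2) = 1}"

text \<open>Inputs: X (i,j) is the j-th coordinate of x_i (i < n, j < d).
  Labels y_i = <v*, phi(W* x_i)> with phi(z) = z^2 entrywise.\<close>
definition label :: "nat \<Rightarrow> nat \<Rightarrow> (nat \<Rightarrow> real) \<Rightarrow> (nat \<Rightarrow> nat \<Rightarrow> real)
     \<Rightarrow> (nat \<times> nat \<Rightarrow> real) \<Rightarrow> nat \<Rightarrow> real" where
  "label k d vs Ws X i = (\<Sum>r<k. vs r * (\<Sum>j<d. Ws r j * X (i, j))^2)"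

definition loss :: "nat \<Rightarrow> nat \<Rightarrow> nat \<Rightarrow> (nat \<Rightarrow> real) \<Rightarrow> (nat \<Rightarrow> nat \<Rightarrow> real)
     \<Rightarrow> (nat \<Rightarrow> real) \<Rightarrow> (nat \<times> nat \<Rightarrow> real) \<Rightarrow> (nat \<Rightarrow> nat \<Rightarrow> real) \<Rightarrow> real" where
  "loss k d n vs Ws v X W =
     1 / (2 * real n) * (\<Sum>i<n. (label k d vs Ws X i
        - (\<Sum>r<k. v r * (\<Sum>j<d. W r j * X (i, j))^2))^2)"

definition is_local_min :: "nat \<Rightarrow> nat \<Rightarrow> ((nat \<Rightarrow> nat \<Rightarrow> real) \<Rightarrow> real)
     \<Rightarrow> (nat \<Rightarrow> nat \<Rightarrow> real) \<Rightarrow> bool" where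
  "is_local_min k d f W \<longleftrightarrow> W \<in> matr k d \<and>
     (\<exists>e>0. \<forall>W'\<in>matr k d. frob2 k d (\<lambda>r j. W' r j - W r j) < e\<^sup>2 \<longrightarrow> f W \<le> f W')"

definition is_local_max :: "nat \<Rightarrow> nat \<Rightarrow> ((nat \<Rightarrow> nat \<Rightarrow> real) \<Rightarrow> real)
     \<Rightarrow> (nat \<Rightarrow> nat \<Rightarrow> real) \<Rightarrow> bool" where
  "is_local_max k d f W \<longleftrightarrow> W \<in> matr k d \<and>
     (\<exists>e>0. \<forall>W'\<in>matr k d. frob2 k d (\<lambda>r j. W' r j - W r j) < e\<^sup>2 \<longrightarrow> f W' \<le> f W)"

definition is_global_min :: "nat \<Rightarrow> nat \<Rightarrow> ((nat \<Rightarrow> nat \<Rightarrow> real) \<Rightarrow> real)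
     \<Rightarrow> (nat \<Rightarrow> nat \<Rightarrow> real) \<Rightarrow> bool" where
  "is_global_min k d f W \<longleftrightarrow> W \<in> matr k d \<and> (\<forall>W'\<in>matr k d. f W \<le> f W')"

definition partial :: "((nat \<Rightarrow> nat \<Rightarrow> real) \<Rightarrow> real) \<Rightarrow> nat \<Rightarrow> nat
     \<Rightarrow> (nat \<Rightarrow> nat \<Rightarrow> real) \<Rightarrow> real" where
  "partial f a b W = deriv (\<lambda>t. f (W(a := (W a)(b := t)))) (W a b)"

definition hess :: "((nat \<Rightarrow> nat \<Rightarrow> real) \<Rightarrow> real) \<Rightarrow> nat \<Rightarrow> nat \<Rightarrow> nat \<Rightarrow> nat
     \<Rightarrow> (nat \<Rightarrow> nat \<Rightarrow> real) \<Rightarrow> real" where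
  "hess f a b c e W = partial (\<lambda>W'. partial f a b W') c e W"

definition hess_form :: "nat \<Rightarrow> nat \<Rightarrow> ((nat \<Rightarrow> nat \<Rightarrow> real) \<Rightarrow> real)
     \<Rightarrow> (nat \<Rightarrow> nat \<Rightarrow> real) \<Rightarrow> (nat \<Rightarrow> nat \<Rightarrow> real) \<Rightarrow> real" where
  "hess_form k d f W U =
     (\<Sum>a<k. \<Sum>b<d. \<Sum>c<k. \<Sum>e<d. U a b * hess f a b c e W * U c e)"

definition is_stationary :: "nat \<Rightarrow> nat \<Rightarrow> ((nat \<Rightarrow> nat \<Rightarrow> real) \<Rightarrow> real)
     \<Rightarrow> (nat \<Rightarrow> nat \<Rightarrow> real) \<Rightarrow> bool" where
  "is_stationary k d f W \<longleftrightarrow> W \<in> matr k d \<and> (\<forall>a<k. \<forall>b<d. partial f a b W = 0)"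

definition is_saddle :: "nat \<Rightarrow> nat \<Rightarrow> ((nat \<Rightarrow> nat \<Rightarrow> real) \<Rightarrow> real)
     \<Rightarrow> (nat \<Rightarrow> nat \<Rightarrow> real) \<Rightarrow> bool" where
  "is_saddle k d f W \<longleftrightarrow> is_stationary k d f W \<and>
     \<not> is_local_min k d f W \<and> \<not> is_local_max k d f W"

end

(*
  At a stationary point W write M = sum_i r_i x_i x_i^T, with r_i the residuals.  Stationarity
  says M w_r = 0 for every hidden unit r with v_r ~= 0.  If s M is positive semidefinite (s the
  common sign of v), then sum_i r_i (f_W'(x_i) - f_W(x_i)) >= 0 for every W', and convexity of the
  square loss makes W a global minimum.  Otherwise take z with s z^T M z < 0: the at least d active
  rows of W all lie in the hyperplane orthogonal to M z ~= 0, hence some nontrivial combination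
  sum_r alpha_r v_r w_r vanishes, and along W + t alpha z^T the loss changes by
  2 t^2 (sum_r v_r alpha_r^2) z^T M z + O(t^4) < 0, which is also the sign of the Hessian in that
  direction.  Zero loss is attained by writing the positive semidefinite target form
  s sum_r v*_r (w*_r . x)^2 as a sum of d squares, one per active unit.
*)

theory Submission
  imports Defs
begin

section \<open>Linear algebra\<close>

lemma dependent_if_more_vectors_than_coords:
  fixes w :: "'a \<Rightarrow> nat \<Rightarrow> 'b::field"
  assumes "finite S" "m < card S" "\<forall>r\<in>S. \<forall>j\<ge>m. w r j = 0"
  shows "\<exists>\<alpha>. (\<exists>r\<in>S. \<alpha> r \<noteq> 0) \<and> (\<forall>j. (\<Sum>r\<in>S. \<alpha> r * w r j) = 0)"
  using assms
proof (induction m arbitrary: S w)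
  case 0
  then obtain r where "r \<in> S" by fastforce
  then show ?case using 0 by (intro exI[of _ "\<lambda>_. 1"]) auto
next
  case (Suc m)
  show ?case
  proof (cases "\<forall>r\<in>S. w r m = 0")
    case True
    then have "\<forall>r\<in>S. \<forall>j\<ge>m. w r j = 0" using Suc.prems(3) by (metis Suc_leI le_neq_implies_less)
    then show ?thesis using Suc.IH[of S w] Suc.prems by simp
  next
    case False
    then obtain pv where pv: "pv \<in> S" "w pv m \<noteq> 0" by blast
    define S' where "S' = S - {pv}"
    define w' where "w' r j = w r j - (w r m / w pv m) * w pv j" for r j
    have S': "finite S'" "m < card S'" using Suc.prems pv by (auto simp: S'_def)
    have "\<forall>r\<in>S'. \<forall>j\<ge>m. w' r j = 0"
      using Suc.prems(3) pv by (auto simp: w'_def S'_def le_Suc_eq dest: le_imp_less_or_eq)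
    then obtain \<beta> where \<beta>: "\<exists>r\<in>S'. \<beta> r \<noteq> 0" "\<forall>j. (\<Sum>r\<in>S'. \<beta> r * w' r j) = 0"
      using Suc.IH[OF S'] by blast
    define \<alpha> where "\<alpha> r = (if r = pv then - (\<Sum>r\<in>S'. \<beta> r * w r m) / w pv m else \<beta> r)" for r
    have S: "S = insert pv S'" "pv \<notin> S'" using pv S'_def by auto
    have "(\<Sum>r\<in>S. \<alpha> r * w r j) = (\<Sum>r\<in>S'. \<beta> r * w' r j)" for j
    proof -
      have "(\<Sum>r\<in>S. \<alpha> r * w r j) = \<alpha> pv * w pv j + (\<Sum>r\<in>S'. \<beta> r * w r j)"
        using S'(1) S by (simp add: \<alpha>_def) (intro sum.cong, auto)
      also have "\<dots> = (\<Sum>r\<in>S'. \<beta> r * w' r j)"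
        by (simp add: w'_def \<alpha>_def algebra_simps sum_subtractf sum_distrib_left sum_divide_distrib)
      finally show ?thesis .
    qed
    moreover have "\<exists>r\<in>S. \<alpha> r \<noteq> 0" using \<beta>(1) by (auto simp: \<alpha>_def S'_def)
    ultimately show ?thesis using \<beta>(2) by auto
  qed
qed

lemma dependent_if_orthogonal_to_nonzero:
  fixes w :: "'a \<Rightarrow> nat \<Rightarrow> real"
  assumes S: "finite S" "d \<le> card S" and supp: "\<forall>r\<in>S. \<forall>j\<ge>d. w r j = 0"
    and orth: "\<forall>r\<in>S. (\<Sum>j<d. w r j * u j) = 0" and u: "\<exists>j<d. u j \<noteq> 0"
  shows "\<exists>\<alpha>. (\<exists>r\<in>S. \<alpha> r \<noteq> 0) \<and> (\<forall>j<d. (\<Sum>r\<in>S. \<alpha> r * w r j) = 0)"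
proof -
  define w' where "w' x j = (case x of None \<Rightarrow> if j < d then u j else 0 | Some r \<Rightarrow> w r j)" for x j
  let ?S = "insert None (Some ` S)"
  have "d < card ?S" using S by (simp add: card_image)
  moreover have "\<forall>x\<in>?S. \<forall>j\<ge>d. w' x j = 0" using supp by (auto simp: w'_def)
  ultimately obtain \<alpha> where \<alpha>: "\<exists>x\<in>?S. \<alpha> x \<noteq> 0" and dep: "\<forall>j. (\<Sum>x\<in>?S. \<alpha> x * w' x j) = 0"
    using dependent_if_more_vectors_than_coords[of ?S d w'] S by auto
  have dep': "\<alpha> None * u j + (\<Sum>r\<in>S. \<alpha> (Some r) * w r j) = 0" if "j < d" for j
    using dep[rule_format, of j] S that by (simp add: sum.reindex w'_def)
  \<comment> \<open>pairing the relation with \<open>u\<close> kills the \<open>w\<close> part, so the coefficient of \<open>u\<close> vanishes\<close>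
  have "(\<Sum>j<d. (\<Sum>r\<in>S. \<alpha> (Some r) * w r j) * u j) = (\<Sum>r\<in>S. \<alpha> (Some r) * (\<Sum>j<d. w r j * u j))"
    by (simp add: sum_distrib_left sum_distrib_right mult.assoc sum.swap[of _ S])
  then have "\<alpha> None * (\<Sum>j<d. u j ^ 2) = (\<Sum>j<d. (\<alpha> None * u j + (\<Sum>r\<in>S. \<alpha> (Some r) * w r j)) * u j)"
    using orth by (simp add: distrib_right sum.distrib sum_distrib_left power2_eq_square mult.assoc)
  also have "\<dots> = 0" using dep' by simp
  finally have "\<alpha> None = 0"
    using u by (auto simp: sum_nonneg_eq_0_iff)
  then show ?thesis using \<alpha> dep' by (intro exI[of _ "\<lambda>r. \<alpha> (Some r)"]) auto
qed

lemma complete_square: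
  fixes c :: "'a \<Rightarrow> real" and l :: "'a \<Rightarrow> nat \<Rightarrow> real"
  assumes R: "finite R" "\<forall>r\<in>R. c r \<ge> 0"
    and a: "a = (\<Sum>r\<in>R. c r * (l r m)\<^sup>2)"
    and \<mu>: "\<mu> = (\<lambda>j. if a = 0 then (if j = m then 1 else 0) else (\<Sum>r\<in>R. c r * l r m * l r j) / a)"
  shows "(\<Sum>r\<in>R. c r * (\<Sum>j<D. l r j * x j)\<^sup>2)
    = a * (\<Sum>j<D. \<mu> j * x j)\<^sup>2 + (\<Sum>r\<in>R. c r * (\<Sum>j<D. (l r j - l r m * \<mu> j) * x j)\<^sup>2)"
proof -
  define M where "M = (\<Sum>j<D. \<mu> j * x j)"
  define Lx where "Lx r = (\<Sum>j<D. l r j * x j)" for r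
  define Nx where "Nx r = (\<Sum>j<D. (l r j - l r m * \<mu> j) * x j)" for r
  have NL: "Nx r = Lx r - l r m * M" for r
    by (simp add: Nx_def Lx_def M_def algebra_simps sum_subtractf sum_distrib_left)
  have cross: "(\<Sum>r\<in>R. c r * l r m * Nx r) = 0"
  proof (cases "a = 0")
    case True
    then have "c r * (l r m)\<^sup>2 = 0" if "r \<in> R" for r
      using R that unfolding a by (subst (asm) sum_nonneg_eq_0_iff) auto
    then have "c r * l r m = 0" if "r \<in> R" for r
      using that by (auto simp: power2_eq_square)
    then show ?thesis by (intro sum.neutral) auto
  next
    case False
    have "a * M = (\<Sum>j<D. (\<Sum>r\<in>R. c r * l r m * l r j) * x j)"
      using False by (simp add: M_def \<mu> sum_distrib_left)
    also have "\<dots> = (\<Sum>j<D. \<Sum>r\<in>R. c r * l r m * (l r j * x j))"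
      by (simp add: sum_distrib_right mult.assoc)
    also have "\<dots> = (\<Sum>r\<in>R. c r * l r m * Lx r)"
      by (subst sum.swap) (simp add: Lx_def sum_distrib_left)
    finally have "a * M = (\<Sum>r\<in>R. c r * l r m * Lx r)" .
    moreover have "(\<Sum>r\<in>R. c r * l r m * Nx r) = (\<Sum>r\<in>R. c r * l r m * Lx r) - a * M"
      by (simp add: NL a algebra_simps sum_subtractf sum_distrib_left power2_eq_square)
    ultimately show ?thesis by simp
  qed
  have "(\<Sum>r\<in>R. c r * (Lx r)\<^sup>2)
      = (\<Sum>r\<in>R. c r * (l r m)\<^sup>2 * M\<^sup>2 + 2 * M * (c r * l r m * Nx r) + c r * (Nx r)\<^sup>2)"
    by (intro sum.cong refl) (simp add: NL power2_eq_square algebra_simps)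
  also have "\<dots> = a * M\<^sup>2 + (\<Sum>r\<in>R. c r * (Nx r)\<^sup>2)"
    using cross by (simp add: sum.distrib a sum_distrib_right flip: sum_distrib_left)
  finally show ?thesis by (simp add: Lx_def M_def Nx_def)
qed

lemma nonneg_form_sum_of_squares:
  fixes c :: "'a \<Rightarrow> real" and l :: "'a \<Rightarrow> nat \<Rightarrow> real"
  assumes "m \<le> D" "finite R" "\<forall>r\<in>R. c r \<ge> 0" "\<forall>r\<in>R. \<forall>j\<ge>m. l r j = 0"
  shows "\<exists>u. (\<forall>i j. m \<le> j \<longrightarrow> u i j = 0) \<and>
    (\<forall>x. (\<Sum>r\<in>R. c r * (\<Sum>j<D. l r j * x j)\<^sup>2) = (\<Sum>i<m. (\<Sum>j<D. u i j * x j)\<^sup>2))"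
  using assms
proof (induction m arbitrary: l)
  case 0
  then show ?case by (intro exI[of _ "\<lambda>i j. 0"]) auto
next
  case (Suc m)
  define a where "a = (\<Sum>r\<in>R. c r * (l r m)\<^sup>2)"
  define \<mu> where "\<mu> = (\<lambda>j. if a = 0 then (if j = m then 1 else 0) else (\<Sum>r\<in>R. c r * l r m * l r j) / a)"
  have "a \<ge> 0" unfolding a_def using Suc.prems by (intro sum_nonneg) auto
  have \<mu>_m: "\<mu> m = 1" unfolding \<mu>_def a_def by (simp add: power2_eq_square mult.assoc)
  have \<mu>_supp: "\<mu> j = 0" if "j > m" for j
    using that Suc.prems(4) unfolding \<mu>_def by auto
  have "\<forall>r\<in>R. \<forall>j\<ge>m. l r j - l r m * \<mu> j = 0"
  proof (intro ballI allI impI)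
    fix r j assume "r \<in> R" "m \<le> j"
    then show "l r j - l r m * \<mu> j = 0"
      using Suc.prems(4) \<mu>_m \<mu>_supp by (cases "j = m") auto
  qed
  moreover have "m \<le> D" using Suc.prems(1) by simp
  ultimately obtain u' where u': "\<forall>i j. m \<le> j \<longrightarrow> u' i j = 0"
    "\<forall>x. (\<Sum>r\<in>R. c r * (\<Sum>j<D. (l r j - l r m * \<mu> j) * x j)\<^sup>2) = (\<Sum>i<m. (\<Sum>j<D. u' i j * x j)\<^sup>2)"
    using Suc.IH[of "\<lambda>r j. l r j - l r m * \<mu> j"] Suc.prems(2,3) by blast
  define u where "u i j = (if i = m then sqrt a * \<mu> j else u' i j)" for i j
  have "\<forall>i j. Suc m \<le> j \<longrightarrow> u i j = 0" using u'(1) \<mu>_supp by (auto simp: u_def)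
  moreover have "(\<Sum>r\<in>R. c r * (\<Sum>j<D. l r j * x j)\<^sup>2) = (\<Sum>i<Suc m. (\<Sum>j<D. u i j * x j)\<^sup>2)" for x
  proof -
    have "a * (\<Sum>j<D. \<mu> j * x j)\<^sup>2 = (\<Sum>j<D. u m j * x j)\<^sup>2"
      using \<open>a \<ge> 0\<close> by (simp add: u_def power_mult_distrib mult.assoc flip: sum_distrib_left)
    moreover have "(\<Sum>i<m. (\<Sum>j<D. u' i j * x j)\<^sup>2) = (\<Sum>i<m. (\<Sum>j<D. u i j * x j)\<^sup>2)"
      by (simp add: u_def)
    ultimately show ?thesis
      using complete_square[OF Suc.prems(2,3) a_def \<mu>_def, where D = D and x = x] u'(2) by simp
  qed
  ultimately show ?case by blast
qed

lemma sum_square_expand: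
  "(\<Sum>a\<in>A. \<Sum>b\<in>B. f a b :: real)\<^sup>2 = (\<Sum>a\<in>A. \<Sum>b\<in>B. \<Sum>c\<in>A. \<Sum>e\<in>B. f a b * f c e)"
  unfolding power2_eq_square by (simp only: sum_distrib_right) (simp only: sum_distrib_left)

section \<open>The loss of a network with quadratic activations\<close>

lemma matr_upd: "W \<in> matr k d \<Longrightarrow> a < k \<Longrightarrow> b < d \<Longrightarrow> W(a := (W a)(b := t)) \<in> matr k d"
  by (auto simp: matr_def)

lemma frob2_upd:
  assumes "a < k" "b < d"
  shows "frob2 k d (\<lambda>r j. (W(a := (W a)(b := t))) r j - W r j) = (t - W a b)\<^sup>2"
proof -
  have "(\<Sum>j<d. ((W(a := (W a)(b := t))) r j - W r j)\<^sup>2) = (if r = a then (t - W a b)\<^sup>2 else 0)" for r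
  proof (cases "r = a")
    case True
    then have "((W(a := (W a)(b := t))) r j - W r j)\<^sup>2 = (if j = b then (t - W a b)\<^sup>2 else 0)" for j
      by simp
    then show ?thesis using True assms by simp
  qed simp
  then show ?thesis using assms by (simp add: frob2_def)
qed

locale quadratic_net =
  fixes k d n :: nat and vs :: "nat \<Rightarrow> real" and Ws :: "nat \<Rightarrow> nat \<Rightarrow> real"
    and v :: "nat \<Rightarrow> real" and X :: "nat \<times> nat \<Rightarrow> real"
begin

abbreviation L :: "(nat \<Rightarrow> nat \<Rightarrow> real) \<Rightarrow> real" where
  "L \<equiv> loss k d n vs Ws v X"

definition \<kappa> :: real where
  "\<kappa> = 1 / (2 * real n)"

definition dotx :: "(nat \<Rightarrow> real) \<Rightarrow> nat \<Rightarrow> real" where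
  "dotx z i = (\<Sum>j<d. z j * X (i, j))"

definition prediction :: "(nat \<Rightarrow> nat \<Rightarrow> real) \<Rightarrow> nat \<Rightarrow> real" where
  "prediction W i = (\<Sum>r<k. v r * (dotx (W r) i)\<^sup>2)"

definition res :: "(nat \<Rightarrow> nat \<Rightarrow> real) \<Rightarrow> nat \<Rightarrow> real" where
  "res W i = prediction W i - label k d vs Ws X i"

text \<open>With \<open>M\<^sub>W = \<Sum>\<^sub>i res W i \<cdot> x\<^sub>i x\<^sub>i\<^sup>T\<close>, \<open>res_mul W z\<close> is \<open>M\<^sub>W z\<close> and
  \<open>res_form W z\<close> is \<open>z\<^sup>T M\<^sub>W z\<close>.\<close>

definition res_mul :: "(nat \<Rightarrow> nat \<Rightarrow> real) \<Rightarrow> (nat \<Rightarrow> real) \<Rightarrow> nat \<Rightarrow> real" where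
  "res_mul W z b = (\<Sum>i<n. res W i * dotx z i * X (i, b))"

definition res_form :: "(nat \<Rightarrow> nat \<Rightarrow> real) \<Rightarrow> (nat \<Rightarrow> real) \<Rightarrow> real" where
  "res_form W z = (\<Sum>i<n. res W i * (dotx z i)\<^sup>2)"

lemma loss_eq: "L W = \<kappa> * (\<Sum>i<n. (res W i)\<^sup>2)"
  by (simp add: loss_def \<kappa>_def res_def prediction_def dotx_def power2_commute)

lemma loss_nonneg: "L W \<ge> 0"
  unfolding loss_eq \<kappa>_def by (intro mult_nonneg_nonneg sum_nonneg) auto

lemma dotx_restrict: "dotx (\<lambda>j. if j < d then z j else 0) i = dotx z i"
  by (simp add: dotx_def)

lemma res_mul_inner: "(\<Sum>b<d. y b * res_mul W z b) = (\<Sum>i<n. res W i * dotx y i * dotx z i)"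
proof -
  have "(\<Sum>b<d. y b * res_mul W z b) = (\<Sum>b<d. \<Sum>i<n. res W i * dotx z i * (y b * X (i, b)))"
    by (simp add: res_mul_def sum_distrib_left mult_ac)
  also have "\<dots> = (\<Sum>i<n. \<Sum>b<d. res W i * dotx z i * (y b * X (i, b)))"
    by (rule sum.swap)
  also have "\<dots> = (\<Sum>i<n. res W i * dotx y i * dotx z i)"
    by (simp add: dotx_def sum_distrib_left mult_ac)
  finally show ?thesis .
qed

lemma res_form_eq_inner: "res_form W z = (\<Sum>b<d. z b * res_mul W z b)"
  by (simp add: res_mul_inner res_form_def power2_eq_square mult_ac)

lemma res_prediction: "(\<Sum>i<n. res W i * prediction W' i) = (\<Sum>r<k. v r * res_form W (W' r))"
proof -
  have "(\<Sum>i<n. res W i * prediction W' i) = (\<Sum>i<n. \<Sum>r<k. v r * (res W i * (dotx (W' r) i)\<^sup>2))"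
    by (simp add: prediction_def sum_distrib_left mult_ac)
  also have "\<dots> = (\<Sum>r<k. \<Sum>i<n. v r * (res W i * (dotx (W' r) i)\<^sup>2))"
    by (rule sum.swap)
  finally show ?thesis by (simp add: res_form_def sum_distrib_left)
qed

lemma dotx_upd:
  assumes "b < d"
  shows "dotx ((W(a := (W a)(b := t))) r) i = dotx (W r) i + (if r = a then (t - W a b) * X (i, b) else 0)"
proof (cases "r = a")
  case True
  have "((W a)(b := t)) j * X (i, j) = W a j * X (i, j) + (if j = b then (t - W a b) * X (i, b) else 0)" for j
    by (auto simp: algebra_simps)
  then show ?thesis using True assms by (simp add: dotx_def sum.distrib)
qed (simp add: dotx_def)

lemma dotx_upd_deriv:
  assumes "b < d"
  shows "((\<lambda>t. dotx ((W(a := (W a)(b := t))) r) i) has_real_derivative (if r = a then X (i, b) else 0)) (at t0)"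
  unfolding dotx_upd[OF assms] by (cases "r = a") (auto intro!: derivative_eq_intros)

lemma res_upd_deriv:
  assumes "b < d"
  shows "((\<lambda>t. res (W(a := (W a)(b := t))) i) has_real_derivative
     (if a < k then 2 * v a * dotx ((W(a := (W a)(b := t0))) a) i * X (i, b) else 0)) (at t0)"
proof -
  have "((\<lambda>t. res (W(a := (W a)(b := t))) i) has_real_derivative
     (\<Sum>r<k. v r * (of_nat 2 * ((if r = a then X (i, b) else 0) * dotx ((W(a := (W a)(b := t0))) r) i ^ (2 - Suc 0)))) - 0) (at t0)"
    unfolding res_def prediction_def
    by (intro DERIV_diff DERIV_sum DERIV_cmult DERIV_const DERIV_power dotx_upd_deriv assms)
  moreover have "(\<Sum>r<k. v r * (of_nat 2 * ((if r = a then X (i, b) else 0) * dotx ((W(a := (W a)(b := t0))) r) i ^ (2 - Suc 0)))) - 0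
     = (if a < k then 2 * v a * dotx ((W(a := (W a)(b := t0))) a) i * X (i, b) else 0)"
    by (simp add: if_distrib[of "\<lambda>x. x * _"] if_distrib[of "\<lambda>x. _ * x"] sum.delta mult_ac cong: if_cong)
  ultimately show ?thesis by simp
qed

lemma loss_upd_deriv:
  assumes "b < d"
  shows "((\<lambda>t. L (W(a := (W a)(b := t)))) has_real_derivative
     \<kappa> * (\<Sum>i<n. 2 * res (W(a := (W a)(b := t0))) i *
       (if a < k then 2 * v a * dotx ((W(a := (W a)(b := t0))) a) i * X (i, b) else 0))) (at t0)"
proof -
  have "((\<lambda>t. L (W(a := (W a)(b := t)))) has_real_derivative \<kappa> * (\<Sum>i<n. of_nat 2 *
      ((if a < k then 2 * v a * dotx ((W(a := (W a)(b := t0))) a) i * X (i, b) else 0)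
       * res (W(a := (W a)(b := t0))) i ^ (2 - Suc 0)))) (at t0)"
    unfolding loss_eq by (intro DERIV_cmult DERIV_sum DERIV_power res_upd_deriv assms)
  then show ?thesis by (simp add: mult_ac)
qed

definition grad :: "(nat \<Rightarrow> nat \<Rightarrow> real) \<Rightarrow> nat \<Rightarrow> nat \<Rightarrow> real" where
  "grad W a b = (if a < k then 4 * \<kappa> * v a * res_mul W (W a) b else 0)"

lemma partial_loss:
  assumes "b < d"
  shows "partial L a b W = grad W a b"
proof -
  have "partial L a b W = \<kappa> * (\<Sum>i<n. 2 * res W i * (if a < k then 2 * v a * dotx (W a) i * X (i, b) else 0))"
    using DERIV_imp_deriv[OF loss_upd_deriv[OF assms, of W a "W a b"]]
    unfolding partial_def fun_upd_triv .
  then show ?thesis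
    by (auto simp: grad_def res_mul_def sum_distrib_left mult_ac)
qed

definition hessian :: "(nat \<Rightarrow> nat \<Rightarrow> real) \<Rightarrow> nat \<Rightarrow> nat \<Rightarrow> nat \<Rightarrow> nat \<Rightarrow> real" where
  "hessian W a b c e = (if a < k then 4 * \<kappa> * v a * (\<Sum>i<n.
     ((if c < k then 2 * v c * dotx (W c) i * X (i, e) else 0) * dotx (W a) i
      + res W i * (if a = c then X (i, e) else 0)) * X (i, b)) else 0)"

lemma hess_loss:
  assumes "b < d" "e < d"
  shows "hess L a b c e W = hessian W a b c e"
proof -
  have grad: "(\<lambda>W'. partial L a b W') = (\<lambda>W'. grad W' a b)"
    using partial_loss[OF assms(1)] by auto
  have "((\<lambda>t. grad (W(c := (W c)(e := t))) a b) has_real_derivative hessian W a b c e) (at (W c e))"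
  proof (cases "a < k")
    case True
    have "((\<lambda>t. 4 * \<kappa> * v a * (\<Sum>i<n. res (W(c := (W c)(e := t))) i
          * dotx ((W(c := (W c)(e := t))) a) i * X (i, b))) has_real_derivative
        4 * \<kappa> * v a * (\<Sum>i<n. ((if c < k then 2 * v c * dotx ((W(c := (W c)(e := W c e))) c) i * X (i, e) else 0)
          * dotx ((W(c := (W c)(e := W c e))) a) i + (if a = c then X (i, e) else 0)
          * res (W(c := (W c)(e := W c e))) i) * X (i, b))) (at (W c e))"
      by (intro DERIV_cmult DERIV_sum DERIV_cmult_right DERIV_mult res_upd_deriv dotx_upd_deriv assms)
    then show ?thesis
      using True unfolding fun_upd_triv by (simp add: grad_def hessian_def res_mul_def mult_ac)
  qed (simp add: grad_def hessian_def)
  then show ?thesis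
    unfolding hess_def grad partial_def by (rule DERIV_imp_deriv)
qed

lemma hess_form_loss:
  "hess_form k d L W U = 4 * \<kappa> * (\<Sum>i<n.
     2 * (\<Sum>a<k. \<Sum>b<d. U a b * v a * dotx (W a) i * X (i, b))\<^sup>2
     + res W i * (\<Sum>a<k. v a * (dotx (U a) i)\<^sup>2))"
proof -
  let ?f = "\<lambda>i a b. U a b * v a * dotx (W a) i * X (i, b)"
  let ?g = "\<lambda>i a b c e. if a = c then v a * (U a b * X (i, b)) * (U c e * X (i, e)) else 0"
  have entry: "U a b * hess L a b c e W * U c e
      = 4 * \<kappa> * (\<Sum>i<n. 2 * (?f i a b * ?f i c e) + res W i * ?g i a b c e)"
    if "a < k" "b < d" "c < k" "e < d" for a b c e
  proof -
    have "U a b * hess L a b c e W * U c e = U a b * (4 * \<kappa> * v a * (\<Sum>i<n.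
        ((2 * v c * dotx (W c) i * X (i, e)) * dotx (W a) i + res W i * (if a = c then X (i, e) else 0))
        * X (i, b))) * U c e"
      using that by (simp add: hess_loss hessian_def)
    also have "\<dots> = 4 * \<kappa> * (\<Sum>i<n. 2 * (?f i a b * ?f i c e) + res W i * ?g i a b c e)"
      unfolding sum_distrib_left sum_distrib_right by (intro sum.cong refl) (auto simp: algebra_simps)
    finally show ?thesis .
  qed
  have diag: "(\<Sum>a<k. \<Sum>b<d. \<Sum>c<k. \<Sum>e<d. ?g i a b c e) = (\<Sum>a<k. v a * (dotx (U a) i)\<^sup>2)" for i
  proof -
    have "(\<Sum>c<k. \<Sum>e<d. ?g i a b c e) = (\<Sum>e<d. v a * (U a b * X (i, b)) * (U a e * X (i, e)))"
      if "a < k" for a b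
    proof -
      have "(\<Sum>c<k. \<Sum>e<d. ?g i a b c e)
          = (\<Sum>c<k. if a = c then (\<Sum>e<d. v a * (U a b * X (i, b)) * (U a e * X (i, e))) else 0)"
        by (intro sum.cong) auto
      then show ?thesis using that by simp
    qed
    then show ?thesis
      by (simp add: dotx_def power2_eq_square sum_product sum_distrib_left mult_ac)
  qed
  have "hess_form k d L W U = (\<Sum>a<k. \<Sum>b<d. \<Sum>c<k. \<Sum>e<d. 4 * \<kappa> *
      (\<Sum>i<n. 2 * (?f i a b * ?f i c e) + res W i * ?g i a b c e))"
    unfolding hess_form_def by (intro sum.cong refl) (simp add: entry)
  also have "\<dots> = 4 * \<kappa> * (\<Sum>i<n. \<Sum>a<k. \<Sum>b<d. \<Sum>c<k. \<Sum>e<d.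
      2 * (?f i a b * ?f i c e) + res W i * ?g i a b c e)"
    by (simp only: sum.swap[where B = "{..<n}"] flip: sum_distrib_left)
  also have "\<dots> = 4 * \<kappa> * (\<Sum>i<n. 2 * (\<Sum>a<k. \<Sum>b<d. \<Sum>c<k. \<Sum>e<d. ?f i a b * ?f i c e)
      + res W i * (\<Sum>a<k. \<Sum>b<d. \<Sum>c<k. \<Sum>e<d. ?g i a b c e))"
    by (simp only: sum.distrib flip: sum_distrib_left)
  finally show ?thesis by (simp only: diag sum_square_expand)
qed

definition stationary :: "(nat \<Rightarrow> nat \<Rightarrow> real) \<Rightarrow> bool" where
  "stationary W \<longleftrightarrow> (\<forall>a<k. v a \<noteq> 0 \<longrightarrow> (\<forall>b<d. res_mul W (W a) b = 0))"

lemma stationary_if_partials_vanish: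
  assumes "n > 0" "\<forall>a<k. \<forall>b<d. partial L a b W = 0"
  shows "stationary W"
  using assms by (auto simp: stationary_def partial_loss grad_def \<kappa>_def)

lemma local_min_partial_zero:
  assumes "is_local_min k d L W" "a < k" "b < d"
  shows "partial L a b W = 0"
proof -
  obtain e where e: "e > 0" "\<forall>W'\<in>matr k d. frob2 k d (\<lambda>r j. W' r j - W r j) < e\<^sup>2 \<longrightarrow> L W \<le> L W'"
    and W: "W \<in> matr k d" using assms(1) unfolding is_local_min_def by blast
  define D where "D = \<kappa> * (\<Sum>i<n. 2 * res W i * (if a < k then 2 * v a * dotx (W a) i * X (i, b) else 0))"
  have D: "((\<lambda>t. L (W(a := (W a)(b := t)))) has_real_derivative D) (at (W a b))"
    using loss_upd_deriv[OF assms(3), of W a "W a b"] unfolding D_def fun_upd_triv .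
  have "\<forall>t. \<bar>W a b - t\<bar> < e \<longrightarrow> L W \<le> L (W(a := (W a)(b := t)))"
  proof (intro allI impI)
    fix t assume "\<bar>W a b - t\<bar> < e"
    then have "\<bar>t - W a b\<bar>\<^sup>2 < e\<^sup>2"
      by (intro power_strict_mono) (auto simp: abs_minus_commute)
    then have "(t - W a b)\<^sup>2 < e\<^sup>2" by simp
    then show "L W \<le> L (W(a := (W a)(b := t)))"
      using e(2) matr_upd[OF W assms(2,3)] frob2_upd[OF assms(2,3)] by simp
  qed
  then have "D = 0" using DERIV_local_min[OF D e(1)] by simp
  then show ?thesis unfolding partial_def using DERIV_imp_deriv[OF D] by simp
qed

lemma res_form_stationary_row:
  assumes "stationary W" "r < k" "v r \<noteq> 0"
  shows "res_form W (W r) = 0"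
  using assms by (simp add: res_form_eq_inner stationary_def)

lemma res_prediction_stationary:
  assumes "stationary W"
  shows "(\<Sum>i<n. res W i * prediction W i) = 0"
  unfolding res_prediction using res_form_stationary_row[OF assms]
  by (intro sum.neutral) (metis lessThan_iff mult_eq_0_iff)

definition active :: "nat set" where
  "active = {r. r < k \<and> v r \<noteq> 0}"

definition in_kernel :: "(nat \<Rightarrow> nat \<Rightarrow> real) \<Rightarrow> (nat \<Rightarrow> real) \<Rightarrow> bool" where
  "in_kernel W \<alpha> \<longleftrightarrow> (\<forall>j<d. (\<Sum>r<k. \<alpha> r * v r * W r j) = 0)"

lemma kernel_direction:
  assumes "stationary W" "d \<le> card active" "res_form W z \<noteq> 0"
  obtains \<alpha> where "\<forall>r. r \<notin> active \<longrightarrow> \<alpha> r = 0" "\<exists>r. \<alpha> r \<noteq> 0" "in_kernel W \<alpha>"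
proof -
  define u where "u = res_mul W z"
  have "(\<Sum>j<d. z j * u j) \<noteq> 0" using assms(3) by (simp add: u_def res_form_eq_inner)
  then have u: "\<exists>j<d. u j \<noteq> 0" by (metis (no_types, lifting) lessThan_iff mult_zero_right sum.neutral)
  \<comment> \<open>the active rows lie in the hyperplane \<open>u\<^sup>\<perp>\<close>, since \<open>M\<^sub>W\<close> is symmetric and kills them\<close>
  have "(\<Sum>j<d. W r j * u j) = 0" if "r \<in> active" for r
  proof -
    have "(\<Sum>j<d. W r j * u j) = (\<Sum>j<d. z j * res_mul W (W r) j)"
      by (simp add: u_def res_mul_inner mult_ac)
    then show ?thesis using assms(1) that by (simp add: stationary_def active_def)
  qed
  moreover have "finite active" by (simp add: active_def)
  ultimately obtain \<beta> where \<beta>: "\<exists>r\<in>active. \<beta> r \<noteq> 0"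
      "\<forall>j<d. (\<Sum>r\<in>active. \<beta> r * (if j < d then W r j else 0)) = 0"
    using dependent_if_orthogonal_to_nonzero[of active d "\<lambda>r j. if j < d then W r j else 0" u] assms(2) u
    by auto
  define \<alpha> where "\<alpha> r = (if r \<in> active then \<beta> r / v r else 0)" for r
  have ker: "(\<Sum>r<k. \<alpha> r * v r * W r j) = (\<Sum>r\<in>active. \<beta> r * (if j < d then W r j else 0))" if "j < d" for j
  proof -
    have "(\<Sum>r<k. \<alpha> r * v r * W r j) = (\<Sum>r\<in>active. \<alpha> r * v r * W r j)"
      by (rule sum.mono_neutral_right) (auto simp: active_def \<alpha>_def)
    also have "\<dots> = (\<Sum>r\<in>active. \<beta> r * (if j < d then W r j else 0))"
      using that by (intro sum.cong refl) (simp add: \<alpha>_def active_def)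
    finally show ?thesis .
  qed
  show ?thesis
  proof (rule that)
    show "\<forall>r. r \<notin> active \<longrightarrow> \<alpha> r = 0" by (simp add: \<alpha>_def)
    show "\<exists>r. \<alpha> r \<noteq> 0" using \<beta>(1) by (auto simp: \<alpha>_def active_def)
    show "in_kernel W \<alpha>" using ker \<beta>(2) by (simp add: in_kernel_def)
  qed
qed

lemma dotx_kernel:
  assumes "in_kernel W \<alpha>"
  shows "(\<Sum>r<k. \<alpha> r * v r * dotx (W r) i) = 0"
proof -
  have "(\<Sum>r<k. \<alpha> r * v r * dotx (W r) i) = (\<Sum>r<k. \<Sum>j<d. \<alpha> r * v r * W r j * X (i, j))"
    by (simp add: dotx_def sum_distrib_left mult_ac)
  also have "\<dots> = (\<Sum>j<d. (\<Sum>r<k. \<alpha> r * v r * W r j) * X (i, j))"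
    by (subst sum.swap) (simp add: sum_distrib_right)
  finally show ?thesis using assms by (simp add: in_kernel_def)
qed

lemma loss_along_kernel_direction:
  assumes "in_kernel W \<alpha>"
  defines "\<beta> \<equiv> \<Sum>r<k. v r * (\<alpha> r)\<^sup>2"
  shows "L (\<lambda>r j. W r j + t * (\<alpha> r * z j)) = L W + \<kappa> * (2 * t\<^sup>2 * (\<beta> * res_form W z)
    + t ^ 4 * (\<beta>\<^sup>2 * (\<Sum>i<n. (dotx z i) ^ 4)))"
proof -
  let ?W' = "\<lambda>r j. W r j + t * (\<alpha> r * z j)"
  have "dotx (?W' r) i = dotx (W r) i + t * \<alpha> r * dotx z i" for r i
    by (simp add: dotx_def algebra_simps sum.distrib sum_distrib_left)
  then have "prediction ?W' i = prediction W i + 2 * t * dotx z i * (\<Sum>r<k. \<alpha> r * v r * dotx (W r) i)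
      + t\<^sup>2 * \<beta> * (dotx z i)\<^sup>2" for i
    by (simp add: prediction_def \<beta>_def power2_eq_square algebra_simps sum.distrib sum_distrib_left)
  then have "res ?W' i = res W i + t\<^sup>2 * \<beta> * (dotx z i)\<^sup>2" for i
    using dotx_kernel[OF assms(1)] by (simp add: res_def)
  then have "L ?W' = \<kappa> * (\<Sum>i<n. (res W i)\<^sup>2 + 2 * t\<^sup>2 * \<beta> * (res W i * (dotx z i)\<^sup>2)
      + t ^ 4 * \<beta>\<^sup>2 * (dotx z i) ^ 4)"
    unfolding loss_eq by (simp add: power2_eq_square power4_eq_xxxx algebra_simps)
  then show ?thesis
    by (simp add: loss_eq res_form_def sum.distrib sum_distrib_left algebra_simps)
qed

lemma hess_form_kernel_direction:
  assumes "in_kernel W \<alpha>"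
  shows "hess_form k d L W (\<lambda>r j. \<alpha> r * z j) = 4 * \<kappa> * ((\<Sum>r<k. v r * (\<alpha> r)\<^sup>2) * res_form W z)"
proof -
  have first: "(\<Sum>a<k. \<Sum>b<d. \<alpha> a * z b * v a * dotx (W a) i * X (i, b)) = 0" for i
  proof -
    have "(\<Sum>a<k. \<Sum>b<d. \<alpha> a * z b * v a * dotx (W a) i * X (i, b))
        = (\<Sum>a<k. \<alpha> a * v a * dotx (W a) i) * dotx z i"
      by (simp add: dotx_def[of z] sum_distrib_left sum_distrib_right mult_ac)
    then show ?thesis using dotx_kernel[OF assms] by simp
  qed
  have second: "(\<Sum>a<k. v a * (dotx (\<lambda>j. \<alpha> a * z j) i)\<^sup>2) = (\<Sum>r<k. v r * (\<alpha> r)\<^sup>2) * (dotx z i)\<^sup>2" for i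
    by (simp add: dotx_def power_mult_distrib sum_distrib_left sum_distrib_right mult_ac
        flip: sum_distrib_left)
  have "hess_form k d L W (\<lambda>r j. \<alpha> r * z j)
      = 4 * \<kappa> * (\<Sum>i<n. 2 * 0\<^sup>2 + res W i * ((\<Sum>r<k. v r * (\<alpha> r)\<^sup>2) * (dotx z i)\<^sup>2))"
    by (simp only: hess_form_loss first second)
  then show ?thesis by (simp add: res_form_def sum_distrib_left mult.left_commute)
qed

end

section \<open>Output weights of one sign\<close>

lemma exists_small_descent:
  fixes Q B F e :: real
  assumes "Q < 0" "B \<ge> 0" "F \<ge> 0" "e > 0"
  shows "\<exists>T>0. T * F < e\<^sup>2 \<and> T * (2 * Q + T * B) < 0"
proof -
  define T where "T = min (e\<^sup>2 / (F + 1)) (- Q / (B + 1))"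
  have T: "T > 0" using assms by (simp add: T_def divide_neg_pos)
  have "T * F \<le> e\<^sup>2 / (F + 1) * F" unfolding T_def using assms by (intro mult_right_mono) auto
  also have "\<dots> < e\<^sup>2" using assms by (simp add: field_simps)
  finally have "T * F < e\<^sup>2" .
  have "T * B \<le> - Q / (B + 1) * B" unfolding T_def using assms by (intro mult_right_mono) auto
  also have "\<dots> = - Q * (B / (B + 1))" by simp
  also have "\<dots> < - Q * 1" using assms by (intro mult_strict_left_mono) auto
  finally have "T * (2 * Q + T * B) < 0" using T assms by (intro mult_pos_neg) auto
  with \<open>T * F < e\<^sup>2\<close> show ?thesis using T by blast
qed

locale same_sign_net = quadratic_net +
  fixes s :: real
  assumes sign: "s = 1 \<or> s = -1"
    and vs_sign: "\<forall>r<k. vs r \<noteq> 0 \<longrightarrow> s * vs r > 0"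
    and v_sign: "\<forall>r<k. v r \<noteq> 0 \<longrightarrow> s * v r > 0"
    and enough_active: "d \<le> card active"
begin

lemma sign_mult: "a * b = (s * a) * (s * b)"
  using sign by auto

lemma v_mult_nonneg:
  assumes "r < k" "s * x \<ge> 0"
  shows "v r * x \<ge> 0"
proof (cases "v r = 0")
  case False
  then have "s * v r > 0" using v_sign assms(1) by blast
  then show ?thesis using assms(2) by (subst sign_mult) simp
qed simp

lemma kernel_weight_sign:
  assumes "\<forall>r. r \<notin> active \<longrightarrow> \<alpha> r = 0" "\<alpha> r0 \<noteq> 0"
  shows "s * (\<Sum>r<k. v r * (\<alpha> r)\<^sup>2) > 0"
proof -
  have r0: "r0 < k" "s * v r0 > 0" using assms v_sign by (auto simp: active_def)
  have "s * (\<Sum>r<k. v r * (\<alpha> r)\<^sup>2) = (\<Sum>r<k. s * v r * (\<alpha> r)\<^sup>2)"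
    by (simp add: sum_distrib_left mult.assoc)
  also have "\<dots> > 0"
  proof (rule sum_pos2[of _ r0])
    show "0 \<le> s * v r * (\<alpha> r)\<^sup>2" if "r \<in> {..<k}" for r
      using v_sign that by (cases "v r = 0") (auto intro: less_imp_le)
  qed (use r0 assms(2) in auto)
  finally show ?thesis .
qed

lemma global_min_if_signed_psd:
  assumes "stationary W" "\<forall>z. s * res_form W z \<ge> 0"
  shows "L W \<le> L W'"
proof -
  have "(\<Sum>i<n. res W i * prediction W' i) \<ge> 0"
    unfolding res_prediction using assms(2) by (intro sum_nonneg v_mult_nonneg) auto
  moreover have "res W i * (res W' i - res W i) = res W i * prediction W' i - res W i * prediction W i"
    for i by (simp add: res_def algebra_simps)
  ultimately have "(\<Sum>i<n. res W i * (res W' i - res W i)) \<ge> 0"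
    using res_prediction_stationary[OF assms(1)] by (simp add: sum_subtractf)
  moreover have "(res W i)\<^sup>2 + 2 * (res W i * (res W' i - res W i)) \<le> (res W' i)\<^sup>2" for i
    using zero_le_power2[of "res W' i - res W i"] by (simp add: power2_eq_square algebra_simps)
  then have "(\<Sum>i<n. (res W i)\<^sup>2 + 2 * (res W i * (res W' i - res W i))) \<le> (\<Sum>i<n. (res W' i)\<^sup>2)"
    by (rule sum_mono)
  then have "(\<Sum>i<n. (res W i)\<^sup>2) + 2 * (\<Sum>i<n. res W i * (res W' i - res W i)) \<le> (\<Sum>i<n. (res W' i)\<^sup>2)"
    by (simp add: sum.distrib sum_distrib_left)
  ultimately have "(\<Sum>i<n. (res W i)\<^sup>2) \<le> (\<Sum>i<n. (res W' i)\<^sup>2)" by linarith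
  then show ?thesis unfolding loss_eq \<kappa>_def by (simp add: divide_right_mono)
qed

lemma negative_curvature_direction:
  assumes "stationary W" "s * res_form W z < 0"
  obtains U Q B where "U \<in> matr k d" "Q < 0" "B \<ge> 0"
    "\<And>t. L (\<lambda>r j. W r j + t * U r j) = L W + \<kappa> * (2 * t\<^sup>2 * Q + t ^ 4 * B)"
    "hess_form k d L W U = 4 * \<kappa> * Q"
proof -
  have "res_form W z \<noteq> 0" using assms(2) by auto
  then obtain \<alpha> where supp: "\<forall>r. r \<notin> active \<longrightarrow> \<alpha> r = 0" and nontriv: "\<exists>r. \<alpha> r \<noteq> 0"
    and ker: "in_kernel W \<alpha>"
    by (rule kernel_direction[OF assms(1) enough_active])
  define z' where "z' j = (if j < d then z j else 0)" for j
  define \<beta> where "\<beta> = (\<Sum>r<k. v r * (\<alpha> r)\<^sup>2)"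
  have dotx_z': "dotx z' i = dotx z i" for i unfolding z'_def by (rule dotx_restrict)
  then have res_form_z': "res_form W z' = res_form W z" by (simp add: res_form_def)
  have "s * \<beta> > 0" using kernel_weight_sign[OF supp] nontriv by (auto simp: \<beta>_def)
  then have "\<beta> * res_form W z < 0" using assms(2) by (subst sign_mult) (simp add: mult_pos_neg)
  show ?thesis
  proof (rule that[of "\<lambda>r j. \<alpha> r * z' j" "\<beta> * res_form W z" "\<beta>\<^sup>2 * (\<Sum>i<n. (dotx z i) ^ 4)"])
    show "(\<lambda>r j. \<alpha> r * z' j) \<in> matr k d"
      using supp by (auto simp: matr_def active_def z'_def)
    show "\<beta> * res_form W z < 0" by fact
    show "\<beta>\<^sup>2 * (\<Sum>i<n. (dotx z i) ^ 4) \<ge> 0"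
      by (intro mult_nonneg_nonneg sum_nonneg) (auto simp: zero_le_even_power)
    show "L (\<lambda>r j. W r j + t * (\<alpha> r * z' j)) = L W + \<kappa> * (2 * t\<^sup>2 * (\<beta> * res_form W z)
        + t ^ 4 * (\<beta>\<^sup>2 * (\<Sum>i<n. (dotx z i) ^ 4)))" for t
      using loss_along_kernel_direction[OF ker, of t z'] by (simp add: \<beta>_def dotx_z' res_form_z')
    show "hess_form k d L W (\<lambda>r j. \<alpha> r * z' j) = 4 * \<kappa> * (\<beta> * res_form W z)"
      using hess_form_kernel_direction[OF ker, of z'] by (simp add: \<beta>_def res_form_z')
  qed
qed

lemma local_min_signed_psd:
  assumes "n > 0" "is_local_min k d L W"
  shows "s * res_form W z \<ge> 0"
proof (rule ccontr)
  assume "\<not> s * res_form W z \<ge> 0"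
  then have neg: "s * res_form W z < 0" by simp
  have "stationary W"
    using stationary_if_partials_vanish[OF assms(1)] local_min_partial_zero[OF assms(2)] by blast
  obtain U Q B where U: "U \<in> matr k d" "Q < 0" "B \<ge> 0"
      "\<And>t. L (\<lambda>r j. W r j + t * U r j) = L W + \<kappa> * (2 * t\<^sup>2 * Q + t ^ 4 * B)"
    by (rule negative_curvature_direction[OF \<open>stationary W\<close> neg]) blast
  obtain e where e: "e > 0" "\<forall>W'\<in>matr k d. frob2 k d (\<lambda>r j. W' r j - W r j) < e\<^sup>2 \<longrightarrow> L W \<le> L W'"
    and W: "W \<in> matr k d" using assms(2) unfolding is_local_min_def by blast
  have "frob2 k d U \<ge> 0" by (simp add: frob2_def sum_nonneg)
  then obtain T where T: "T > 0" "T * frob2 k d U < e\<^sup>2" "T * (2 * Q + T * B) < 0"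
    using exists_small_descent[OF U(2,3) _ e(1)] by blast
  define W' where "W' = (\<lambda>r j. W r j + sqrt T * U r j)"
  have "W' \<in> matr k d" using W U(1) by (simp add: matr_def W'_def)
  moreover have "frob2 k d (\<lambda>r j. W' r j - W r j) = T * frob2 k d U"
    using T(1) by (simp add: frob2_def W'_def power_mult_distrib sum_distrib_left)
  ultimately have "L W \<le> L W'" using e(2) T(2) by simp
  moreover have "(sqrt T) ^ 4 = ((sqrt T)\<^sup>2)\<^sup>2" by (simp flip: power_mult)
  then have "(sqrt T) ^ 4 = T\<^sup>2" using T(1) by simp
  then have "L W' = L W + \<kappa> * (T * (2 * Q + T * B))"
    using U(4)[of "sqrt T"] T(1) by (simp add: W'_def algebra_simps power2_eq_square)
  moreover have "\<kappa> * (T * (2 * Q + T * B)) < 0"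
    using assms(1) T(3) by (simp add: \<kappa>_def divide_neg_pos)
  ultimately show False by simp
qed

lemma local_min_is_global:
  assumes "is_local_min k d L W"
  shows "is_global_min k d L W"
proof (cases "n = 0")
  case True
  then have "L W' = 0" for W' by (simp add: loss_def)
  then show ?thesis using assms by (simp add: is_global_min_def is_local_min_def)
next
  case False
  have "stationary W"
    using stationary_if_partials_vanish local_min_partial_zero[OF assms] False by blast
  moreover have "\<forall>z. s * res_form W z \<ge> 0"
    using local_min_signed_psd[OF _ assms] False by blast
  ultimately show ?thesis
    using global_min_if_signed_psd assms by (simp add: is_global_min_def is_local_min_def)
qed

lemma saddle_has_negative_curvature:
  assumes "is_saddle k d L W"
  shows "\<exists>U\<in>matr k d. hess_form k d L W U < 0"
proof (cases "n = 0")
  case True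
  then have "L W' = 0" for W' by (simp add: loss_def)
  moreover have "W \<in> matr k d" using assms by (simp add: is_saddle_def is_stationary_def)
  ultimately have "is_local_min k d L W"
    unfolding is_local_min_def by (auto intro!: exI[of _ "1::real"])
  then show ?thesis using assms by (simp add: is_saddle_def)
next
  case False
  have W: "W \<in> matr k d" "stationary W" "\<not> is_local_min k d L W"
    using assms stationary_if_partials_vanish False unfolding is_saddle_def is_stationary_def by auto
  have "\<not> (\<forall>z. s * res_form W z \<ge> 0)"
  proof
    assume "\<forall>z. s * res_form W z \<ge> 0"
    then have "is_local_min k d L W"
      using global_min_if_signed_psd[OF W(2)] W(1) unfolding is_local_min_def by (auto intro: exI[of _ 1])
    with W(3) show False by blast
  qed
  then obtain z where "s * res_form W z < 0" by (auto simp: not_le)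
  then obtain U Q where "U \<in> matr k d" "Q < 0" "hess_form k d L W U = 4 * \<kappa> * Q"
    by (rule negative_curvature_direction[OF W(2)]) blast
  moreover have "\<kappa> > 0" using False by (simp add: \<kappa>_def)
  ultimately show ?thesis by (metis mult_pos_neg zero_less_numeral mult_pos_pos)
qed

lemma label_sum_of_squares:
  obtains u where "\<forall>i j. d \<le> j \<longrightarrow> u i j = 0" "\<And>i. label k d vs Ws X i = s * (\<Sum>m<d. (dotx (u m) i)\<^sup>2)"
proof -
  have "\<forall>r\<in>{..<k}. s * vs r \<ge> 0" using vs_sign by (auto intro: less_imp_le)
  then obtain u where u_supp: "\<forall>i j. d \<le> j \<longrightarrow> u i j = 0" and u_sos: "\<forall>x.
      (\<Sum>r\<in>{..<k}. s * vs r * (\<Sum>j<d. (if j < d then Ws r j else 0) * x j)\<^sup>2) = (\<Sum>i<d. (\<Sum>j<d. u i j * x j)\<^sup>2)"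
    using nonneg_form_sum_of_squares[where m = d and D = d and R = "{..<k}" and c = "\<lambda>r. s * vs r"
        and l = "\<lambda>r j. if j < d then Ws r j else 0"] by auto
  have "label k d vs Ws X i = s * (\<Sum>m<d. (dotx (u m) i)\<^sup>2)" for i
  proof -
    have "(\<Sum>j<d. (if j < d then Ws r j else 0) * X (i, j)) = (\<Sum>j<d. Ws r j * X (i, j))" for r
      by (intro sum.cong) auto
    then have "(\<Sum>r<k. s * vs r * (\<Sum>j<d. Ws r j * X (i, j))\<^sup>2) = (\<Sum>m<d. (dotx (u m) i)\<^sup>2)"
      using u_sos[rule_format, of "\<lambda>j. X (i, j)"] by (simp add: dotx_def)
    then show ?thesis
      using sign by (auto simp: label_def sum_negf)
  qed
  with u_supp show ?thesis by (rule that)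
qed

lemma exists_zero_loss: "\<exists>W\<in>matr k d. L W = 0"
proof -
  obtain u where u_supp: "\<forall>i j. d \<le> j \<longrightarrow> u i j = 0"
    and label: "\<And>i. label k d vs Ws X i = s * (\<Sum>m<d. (dotx (u m) i)\<^sup>2)"
    using label_sum_of_squares by blast
  obtain h where h: "h ` {..<d} \<subseteq> active" "inj_on h {..<d}"
    using card_le_inj[of "{..<d}" active] enough_active by (auto simp: active_def)
  \<comment> \<open>the \<open>d\<close> squares of the decomposition are carried by \<open>d\<close> active units, rescaled by \<open>1 / \<surd>(s v\<^sub>r)\<close>\<close>
  define W0 where "W0 r j = (if r \<in> h ` {..<d} then u (the_inv_into {..<d} h r) j / sqrt (s * v r) else 0)"
    for r j
  have "W0 \<in> matr k d"
    using h(1) u_supp by (auto simp: matr_def W0_def active_def)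
  moreover have "prediction W0 i = label k d vs Ws X i" for i
  proof -
    have "prediction W0 i = (\<Sum>r\<in>h ` {..<d}. v r * (dotx (W0 r) i)\<^sup>2)"
      unfolding prediction_def using h(1)
      by (intro sum.mono_neutral_right) (auto simp: active_def W0_def dotx_def)
    also have "\<dots> = (\<Sum>m<d. v (h m) * (dotx (W0 (h m)) i)\<^sup>2)"
      using h(2) by (simp add: sum.reindex)
    also have "\<dots> = (\<Sum>m<d. s * (dotx (u m) i)\<^sup>2)"
    proof (intro sum.cong refl)
      fix m assume m: "m \<in> {..<d}"
      have pos: "s * v (h m) > 0" using h(1) m v_sign by (auto simp: active_def)
      have "dotx (W0 (h m)) i = dotx (u m) i / sqrt (s * v (h m))"
        using m h(2) by (simp add: W0_def dotx_def the_inv_into_f_f sum_divide_distrib)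
      then show "v (h m) * (dotx (W0 (h m)) i)\<^sup>2 = s * (dotx (u m) i)\<^sup>2"
        using pos sign by (auto simp: power_divide)
    qed
    finally show ?thesis by (simp add: label sum_distrib_left)
  qed
  then have "L W0 = 0" by (simp add: loss_eq res_def)
  ultimately show ?thesis by blast
qed

end

theorem theorem2p2:
  "\<exists>c::real. c > 0 \<and>
    (\<forall>(k::nat) (d::nat) (n::nat) Ws (vs::nat \<Rightarrow> real) (v::nat \<Rightarrow> real) (s::real).
      d \<le> k \<longrightarrow> Ws \<in> matr k d \<longrightarrow> sigma_min k d Ws > 0 \<longrightarrow>
      (s = 1 \<or> s = -1) \<longrightarrow>
      (\<forall>r<k. vs r \<noteq> 0 \<longrightarrow> s * vs r > 0) \<longrightarrow>
      (\<forall>r<k. v r \<noteq> 0 \<longrightarrow> s * v r > 0) \<longrightarrow>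
      card {r. r < k \<and> v r \<noteq> 0} \<ge> d \<longrightarrow>
      real d \<le> real n \<longrightarrow> real n \<le> c * (real d)\<^sup>2 \<longrightarrow>
      (AE X in PiM ({..<n} \<times> {..<d}) (\<lambda>_. lborel).
         (\<forall>W. is_local_min k d (loss k d n vs Ws v X) W \<longrightarrow>
                is_global_min k d (loss k d n vs Ws v X) W) \<and>
         (\<forall>W. is_saddle k d (loss k d n vs Ws v X) W \<longrightarrow>
                (\<exists>U\<in>matr k d. hess_form k d (loss k d n vs Ws v X) W U < 0)) \<and>
         (\<exists>W. is_global_min k d (loss k d n vs Ws v X) W \<and>
                loss k d n vs Ws v X W = 0)))"
proof (intro exI[of _ 1] conjI allI impI)
  fix k d n :: nat and Ws and vs v :: "nat \<Rightarrow> real" and s :: real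
  assume sign: "s = 1 \<or> s = -1" and vs_sign: "\<forall>r<k. vs r \<noteq> 0 \<longrightarrow> s * vs r > 0"
    and v_sign: "\<forall>r<k. v r \<noteq> 0 \<longrightarrow> s * v r > 0" and active: "card {r. r < k \<and> v r \<noteq> 0} \<ge> d"
  show "AE X in PiM ({..<n} \<times> {..<d}) (\<lambda>_. lborel).
         (\<forall>W. is_local_min k d (loss k d n vs Ws v X) W \<longrightarrow>
                is_global_min k d (loss k d n vs Ws v X) W) \<and>
         (\<forall>W. is_saddle k d (loss k d n vs Ws v X) W \<longrightarrow>
                (\<exists>U\<in>matr k d. hess_form k d (loss k d n vs Ws v X) W U < 0)) \<and>
         (\<exists>W. is_global_min k d (loss k d n vs Ws v X) W \<and>
                loss k d n vs Ws v X W = 0)"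
  proof (rule AE_I2)
    fix X
    interpret same_sign_net k d n vs Ws v X s
      using sign vs_sign v_sign active by unfold_locales (simp_all add: quadratic_net.active_def)
    obtain W0 where "W0 \<in> matr k d" "L W0 = 0" using exists_zero_loss by blast
    then have "is_global_min k d L W0" using loss_nonneg by (simp add: is_global_min_def)
    then show "(\<forall>W. is_local_min k d L W \<longrightarrow> is_global_min k d L W) \<and>
        (\<forall>W. is_saddle k d L W \<longrightarrow> (\<exists>U\<in>matr k d. hess_form k d L W U < 0)) \<and>
        (\<exists>W. is_global_min k d L W \<and> L W = 0)"
      using local_min_is_global saddle_has_negative_curvature \<open>L W0 = 0\<close> by blast
  qed
qed simp

end
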